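(* Let $V$ be a finite set with $|V|=K$, let $\eta>0$, and let $\ell_1,\dots,\ell_T:V\to[0,\infty)$ be loss functions (so $\ell_t(i)\ge 0$ for all $t,i$). Let $q_1,\dots,q_T$ be the probability vectors $$q_t(i)=\frac{\exp(-\eta\sum_{s=1}^{t-1}\ell_s(i))}{\sum_{j\in V}\exp(-\eta\sum_{s=1}^{t-1}\ell_s(j))},\qquad i\in V.$$ For each $t$ let $S_t\subseteq V$ be such that $\ell_t(i)\le 1/\eta$ for all $i\in S_t$. Then for any $i^\star\in V$, $$\sum_{t=1}^T\sum_{i\in V}q_t(i)\ell_t(i)-\sum_{t=1}^T\ell_t(i^\star)\le\frac{\ln K}{\eta}+\eta\sum_{t=1}^T\Big(\sum_{i\in S_t}q_t(i)(1-q_t(i))\ell_t(i)^2+\sum_{i\notin S_t}q_t(i)\ell_t(i)^2\Big).$$ *)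

theory Defs
  imports Complex_Main
begin

definition hedge_q :: "'a set \<Rightarrow> real \<Rightarrow> (nat \<Rightarrow> 'a \<Rightarrow> real) \<Rightarrow> nat \<Rightarrow> 'a \<Rightarrow> real" where
  "hedge_q V \<eta> l t i =
     exp (- \<eta> * (\<Sum>s=1..<t. l s i)) / (\<Sum>j\<in>V. exp (- \<eta> * (\<Sum>s=1..<t. l s j)))"

end

theory Submission
  imports Defs
begin

text \<open>The potential \<open>W t = (\<Sum>j\<in>V. exp (-\<eta> * L t j))\<close>, with \<open>L t j\<close>
  the cumulative loss of \<open>j\<close> before round \<open>t\<close>, starts at \<open>W 1 = K\<close>, ends above
  \<open>exp (-\<eta> * L (T+1) i\<^sup>\<star>)\<close>, and each round multiplies it by \<open>\<Sum>i\<in>V. q t i * exp (-\<eta> * l t i)\<close>.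
  The logarithm of this factor is bounded with \<open>exp (-y) \<le> 1 - y + y\<^sup>2\<close> (valid for \<open>y \<ge> -1\<close>)
  after centring the scaled losses at \<open>c = (\<Sum>i\<in>S t. q t i * \<eta> * l t i)\<close>, which is at most 1
  because the losses on \<open>S t\<close> are at most \<open>1/\<eta>\<close>.\<close>

lemma exp_minus_le_quadratic:
  fixes y :: real
  assumes "y \<ge> -1"
  shows "exp (-y) \<le> 1 - y + y\<^sup>2"
proof (cases "y \<ge> 0")
  case True
  have "exp (-y) \<le> 1 / (1 + y)"
    using exp_ge_add_one_self[of y] True by (simp add: exp_minus field_simps)
  also have "\<dots> \<le> 1 - y + y\<^sup>2"
    using True by (simp add: field_simps power2_eq_square)
  finally show ?thesis .
next
  case False
  have "exp (-y) \<le> 1 + (-y) + (-y)\<^sup>2"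
    by (rule exp_bound) (use False assms in auto)
  then show ?thesis by simp
qed

lemma sum_squares_le_square_sum:
  fixes a :: "'b \<Rightarrow> real"
  assumes "finite A" and "\<And>i. i \<in> A \<Longrightarrow> a i \<ge> 0"
  shows "(\<Sum>i\<in>A. (a i)\<^sup>2) \<le> (\<Sum>i\<in>A. a i)\<^sup>2"
  using assms
proof (induction A rule: finite_induct)
  case (insert x F)
  have "0 \<le> a x * (\<Sum>i\<in>F. a i)"
    by (intro mult_nonneg_nonneg sum_nonneg) (auto simp: insert.prems)
  then show ?case
    using insert by (simp add: power2_eq_square algebra_simps)
qed simp

lemma ln_sum_exp_le_second_moment:
  fixes q x :: "'b \<Rightarrow> real"
  assumes "finite V" and q_nonneg: "\<And>i. i \<in> V \<Longrightarrow> q i \<ge> 0" and q_sum: "(\<Sum>i\<in>V. q i) = 1"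
    and shift: "\<And>i. i \<in> V \<Longrightarrow> x i - c \<ge> -1"
  shows "ln (\<Sum>i\<in>V. q i * exp (- x i)) \<le> - (\<Sum>i\<in>V. q i * x i) + (\<Sum>i\<in>V. q i * (x i - c)\<^sup>2)"
proof -
  define m where "m = - (\<Sum>i\<in>V. q i * x i) + (\<Sum>i\<in>V. q i * (x i - c)\<^sup>2)"
  obtain j where j: "j \<in> V" "q j \<noteq> 0"
    using q_sum by (metis sum.not_neutral_contains_not_neutral zero_neq_one)
  have "(\<Sum>i\<in>V. q i * (1 - (x i - c) + (x i - c)\<^sup>2))
      = (\<Sum>i\<in>V. q i) * (1 + c) - (\<Sum>i\<in>V. q i * x i) + (\<Sum>i\<in>V. q i * (x i - c)\<^sup>2)"
    by (simp add: algebra_simps sum.distrib sum_subtractf sum_distrib_left sum_distrib_right)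
  then have mean: "(\<Sum>i\<in>V. q i * (1 - (x i - c) + (x i - c)\<^sup>2)) = 1 + (c + m)"
    using q_sum unfolding m_def by simp
  have pos: "(\<Sum>i\<in>V. q i * exp (- x i)) > 0"
    using j q_nonneg \<open>finite V\<close> by (intro sum_pos2[of V j]) (auto simp: order.strict_iff_order)
  have "(\<Sum>i\<in>V. q i * exp (- x i)) \<le> (\<Sum>i\<in>V. q i * (exp (-c) * (1 - (x i - c) + (x i - c)\<^sup>2)))"
  proof (intro sum_mono mult_left_mono)
    fix i assume "i \<in> V"
    have "exp (- x i) = exp (-c) * exp (- (x i - c))"
      by (simp flip: exp_add)
    also have "\<dots> \<le> exp (-c) * (1 - (x i - c) + (x i - c)\<^sup>2)"
      using shift[OF \<open>i \<in> V\<close>] by (intro mult_left_mono exp_minus_le_quadratic) auto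
    finally show "exp (- x i) \<le> exp (-c) * (1 - (x i - c) + (x i - c)\<^sup>2)" .
  qed (use q_nonneg in auto)
  also have "\<dots> = exp (-c) * (\<Sum>i\<in>V. q i * (1 - (x i - c) + (x i - c)\<^sup>2))"
    by (simp add: sum_distrib_left algebra_simps)
  also have "\<dots> = exp (-c) * (1 + (c + m))"
    by (simp only: mean)
  also have "\<dots> \<le> exp (-c) * exp (c + m)"
    by (intro mult_left_mono exp_ge_add_one_self) auto
  also have "\<dots> = exp m"
    by (simp flip: exp_add)
  finally show ?thesis
    using pos unfolding m_def by (metis ln_exp ln_le_cancel_iff exp_gt_zero)
qed

text \<open>Centring at the partial mean over \<open>S\<close> rather than the full mean is what produces the
  factor \<open>1 - q i\<close> on \<open>S\<close>, through \<open>c\<^sup>2 \<ge> (\<Sum>i\<in>S. (q i * x i)\<^sup>2)\<close>.\<close>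

lemma second_moment_about_partial_mean_le:
  fixes q x :: "'b \<Rightarrow> real"
  assumes "finite V" and q_nonneg: "\<And>i. i \<in> V \<Longrightarrow> q i \<ge> 0" and q_sum: "(\<Sum>i\<in>V. q i) = 1"
    and x_nonneg: "\<And>i. i \<in> V \<Longrightarrow> x i \<ge> 0" and "S \<subseteq> V"
  shows "(\<Sum>i\<in>V. q i * (x i - (\<Sum>j\<in>S. q j * x j))\<^sup>2)
         \<le> (\<Sum>i\<in>S. q i * (1 - q i) * (x i)\<^sup>2) + (\<Sum>i\<in>V - S. q i * (x i)\<^sup>2)"
proof -
  define c where "c = (\<Sum>j\<in>S. q j * x j)"
  define \<mu> where "\<mu> = (\<Sum>i\<in>V. q i * x i)"
  have "(\<Sum>i\<in>V. q i * (x i - c)\<^sup>2) = (\<Sum>i\<in>V. q i * (x i)\<^sup>2) - 2 * c * \<mu> + c\<^sup>2 * (\<Sum>i\<in>V. q i)"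
    unfolding \<mu>_def
    by (simp add: power2_eq_square algebra_simps sum.distrib sum_subtractf sum_distrib_left sum_distrib_right)
  then have "(\<Sum>i\<in>V. q i * (x i - c)\<^sup>2) = (\<Sum>i\<in>V. q i * (x i)\<^sup>2) - 2 * c * \<mu> + c\<^sup>2"
    using q_sum by simp
  moreover have "c\<^sup>2 \<le> c * \<mu>"
  proof -
    have "c \<ge> 0"
      unfolding c_def using \<open>S \<subseteq> V\<close> q_nonneg x_nonneg by (auto intro!: sum_nonneg)
    moreover have "c \<le> \<mu>"
      unfolding c_def \<mu>_def using \<open>S \<subseteq> V\<close> q_nonneg x_nonneg \<open>finite V\<close> by (intro sum_mono2) auto
    ultimately show ?thesis by (simp add: power2_eq_square mult_left_mono)
  qed
  moreover have "(\<Sum>i\<in>S. (q i * x i)\<^sup>2) \<le> c\<^sup>2"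
    unfolding c_def using \<open>S \<subseteq> V\<close> q_nonneg x_nonneg \<open>finite V\<close>
    by (intro sum_squares_le_square_sum) (auto intro: finite_subset)
  moreover have "(\<Sum>i\<in>V. q i * (x i)\<^sup>2) = (\<Sum>i\<in>S. q i * (x i)\<^sup>2) + (\<Sum>i\<in>V - S. q i * (x i)\<^sup>2)"
    using sum.subset_diff[OF \<open>S \<subseteq> V\<close> \<open>finite V\<close>] by (simp add: add.commute)
  moreover have "(\<Sum>i\<in>S. q i * (1 - q i) * (x i)\<^sup>2) = (\<Sum>i\<in>S. q i * (x i)\<^sup>2) - (\<Sum>i\<in>S. (q i * x i)\<^sup>2)"
    by (simp add: power2_eq_square algebra_simps flip: sum_subtractf)
  ultimately show ?thesis
    unfolding c_def[symmetric] by linarith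
qed

lemma ln_sum_exp_le_refined_variance:
  fixes q x :: "'b \<Rightarrow> real"
  assumes "finite V" and q_nonneg: "\<And>i. i \<in> V \<Longrightarrow> q i \<ge> 0" and q_sum: "(\<Sum>i\<in>V. q i) = 1"
    and x_nonneg: "\<And>i. i \<in> V \<Longrightarrow> x i \<ge> 0" and "S \<subseteq> V" and x_le_1: "\<And>i. i \<in> S \<Longrightarrow> x i \<le> 1"
  shows "ln (\<Sum>i\<in>V. q i * exp (- x i)) \<le> - (\<Sum>i\<in>V. q i * x i)
           + ((\<Sum>i\<in>S. q i * (1 - q i) * (x i)\<^sup>2) + (\<Sum>i\<in>V - S. q i * (x i)\<^sup>2))"
proof -
  define c where "c = (\<Sum>j\<in>S. q j * x j)"
  have "c \<le> (\<Sum>j\<in>S. q j)"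
    unfolding c_def using \<open>S \<subseteq> V\<close> q_nonneg x_le_1 by (intro sum_mono) (auto intro: mult_left_le)
  also have "\<dots> \<le> 1"
    using \<open>S \<subseteq> V\<close> q_nonneg \<open>finite V\<close> q_sum by (metis DiffD1 sum_mono2)
  finally have "c \<le> 1" .
  then have shift: "x i - c \<ge> -1" if "i \<in> V" for i
    using x_nonneg[OF that] by linarith
  have "ln (\<Sum>i\<in>V. q i * exp (- x i)) \<le> - (\<Sum>i\<in>V. q i * x i) + (\<Sum>i\<in>V. q i * (x i - c)\<^sup>2)"
    by (rule ln_sum_exp_le_second_moment) (use assms shift in auto)
  moreover have "(\<Sum>i\<in>V. q i * (x i - c)\<^sup>2)
      \<le> (\<Sum>i\<in>S. q i * (1 - q i) * (x i)\<^sup>2) + (\<Sum>i\<in>V - S. q i * (x i)\<^sup>2)"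
    unfolding c_def by (rule second_moment_about_partial_mean_le) (use assms in auto)
  ultimately show ?thesis by linarith
qed

definition hedge_potential :: "'a set \<Rightarrow> real \<Rightarrow> (nat \<Rightarrow> 'a \<Rightarrow> real) \<Rightarrow> nat \<Rightarrow> real" where
  "hedge_potential V \<eta> l t = (\<Sum>j\<in>V. exp (- \<eta> * (\<Sum>s=1..<t. l s j)))"

lemma hedge_q_eq_div_potential:
  "hedge_q V \<eta> l t i = exp (- \<eta> * (\<Sum>s=1..<t. l s i)) / hedge_potential V \<eta> l t"
  unfolding hedge_q_def hedge_potential_def ..

lemma hedge_potential_pos: "finite V \<Longrightarrow> V \<noteq> {} \<Longrightarrow> hedge_potential V \<eta> l t > 0"
  unfolding hedge_potential_def by (intro sum_pos) auto

lemma hedge_q_nonneg: "finite V \<Longrightarrow> V \<noteq> {} \<Longrightarrow> hedge_q V \<eta> l t i \<ge> 0"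
  unfolding hedge_q_eq_div_potential by (intro divide_nonneg_pos hedge_potential_pos) auto

lemma sum_hedge_q: "finite V \<Longrightarrow> V \<noteq> {} \<Longrightarrow> (\<Sum>i\<in>V. hedge_q V \<eta> l t i) = 1"
  using hedge_potential_pos[of V \<eta> l t]
  by (simp add: hedge_q_eq_div_potential hedge_potential_def flip: sum_divide_distrib)

lemma hedge_potential_1: "hedge_potential V \<eta> l 1 = real (card V)"
  by (simp add: hedge_potential_def)

lemma hedge_potential_Suc:
  assumes "finite V" and "V \<noteq> {}" and "t \<ge> 1"
  shows "hedge_potential V \<eta> l (Suc t)
         = hedge_potential V \<eta> l t * (\<Sum>i\<in>V. hedge_q V \<eta> l t i * exp (- (\<eta> * l t i)))"
  using hedge_potential_pos[OF assms(1,2), of \<eta> l t] \<open>t \<ge> 1\<close>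
  by (simp add: hedge_q_eq_div_potential hedge_potential_def sum_distrib_left distrib_left
      flip: exp_add)

lemma ln_hedge_potential_ge:
  assumes "finite V" and "i \<in> V"
  shows "- \<eta> * (\<Sum>s=1..<t. l s i) \<le> ln (hedge_potential V \<eta> l t)"
proof -
  have "exp (- \<eta> * (\<Sum>s=1..<t. l s i)) \<le> hedge_potential V \<eta> l t"
    unfolding hedge_potential_def using assms by (intro member_le_sum) auto
  then show ?thesis
    using hedge_potential_pos[OF assms(1)] assms(2) by (metis empty_iff exp_gt_zero ln_exp ln_le_cancel_iff)
qed

lemma ln_hedge_potential_Suc_le:
  assumes "finite V" and "V \<noteq> {}" and "\<eta> > 0" and "t \<ge> 1"
    and "\<And>i. i \<in> V \<Longrightarrow> l t i \<ge> 0" and "S \<subseteq> V"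
    and "\<And>i. i \<in> S \<Longrightarrow> l t i \<le> 1 / \<eta>"
  shows "ln (hedge_potential V \<eta> l (Suc t)) - ln (hedge_potential V \<eta> l t)
         \<le> - \<eta> * (\<Sum>i\<in>V. hedge_q V \<eta> l t i * l t i)
           + \<eta>\<^sup>2 * ((\<Sum>i\<in>S. hedge_q V \<eta> l t i * (1 - hedge_q V \<eta> l t i) * (l t i)\<^sup>2)
                    + (\<Sum>i\<in>V - S. hedge_q V \<eta> l t i * (l t i)\<^sup>2))"
proof -
  let ?q = "hedge_q V \<eta> l t" and ?W = "hedge_potential V \<eta> l"
  have W_pos: "?W t > 0" "?W (Suc t) > 0"
    using hedge_potential_pos[OF assms(1,2)] by auto
  have "ln (?W (Suc t)) - ln (?W t) = ln (\<Sum>i\<in>V. ?q i * exp (- (\<eta> * l t i)))"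
    using hedge_potential_Suc[OF assms(1,2,4), of \<eta> l] W_pos
    by (simp add: ln_mult zero_less_mult_iff)
  also have "\<dots> \<le> - (\<Sum>i\<in>V. ?q i * (\<eta> * l t i))
      + ((\<Sum>i\<in>S. ?q i * (1 - ?q i) * (\<eta> * l t i)\<^sup>2) + (\<Sum>i\<in>V - S. ?q i * (\<eta> * l t i)\<^sup>2))"
    using assms hedge_q_nonneg[OF assms(1,2)] sum_hedge_q[OF assms(1,2)]
    by (intro ln_sum_exp_le_refined_variance) (auto simp: field_simps)
  also have "\<dots> = - \<eta> * (\<Sum>i\<in>V. ?q i * l t i)
      + \<eta>\<^sup>2 * ((\<Sum>i\<in>S. ?q i * (1 - ?q i) * (l t i)\<^sup>2) + (\<Sum>i\<in>V - S. ?q i * (l t i)\<^sup>2))"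
    by (simp add: sum_distrib_left power_mult_distrib algebra_simps sum_negf)
  finally show ?thesis .
qed

theorem lemma4:
  fixes V :: "'a set" and K :: nat and \<eta> :: real and l :: "nat \<Rightarrow> 'a \<Rightarrow> real"
    and T :: nat and S :: "nat \<Rightarrow> 'a set" and istar :: 'a
  assumes "finite V" and "card V = K" and "\<eta> > 0"
    and "\<And>t i. t \<in> {1..T} \<Longrightarrow> i \<in> V \<Longrightarrow> l t i \<ge> 0"
    and "\<And>t. t \<in> {1..T} \<Longrightarrow> S t \<subseteq> V"
    and "\<And>t i. t \<in> {1..T} \<Longrightarrow> i \<in> S t \<Longrightarrow> l t i \<le> 1 / \<eta>"
    and "istar \<in> V"
  shows "(\<Sum>t=1..T. \<Sum>i\<in>V. hedge_q V \<eta> l t i * l t i) - (\<Sum>t=1..T. l t istar)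
         \<le> ln (real K) / \<eta>
           + \<eta> * (\<Sum>t=1..T. (\<Sum>i\<in>S t. hedge_q V \<eta> l t i * (1 - hedge_q V \<eta> l t i) * (l t i)\<^sup>2)
                              + (\<Sum>i\<in>V - S t. hedge_q V \<eta> l t i * (l t i)\<^sup>2))"
    (is "?loss - ?best \<le> _ + \<eta> * (\<Sum>t=1..T. ?R t)")
proof -
  let ?W = "hedge_potential V \<eta> l"
  have "V \<noteq> {}" using \<open>istar \<in> V\<close> by auto
  have "?W 1 = real K"
    unfolding hedge_potential_1 using \<open>card V = K\<close> by simp
  moreover have "{1..<Suc T} = {1..T}" by auto
  ultimately have "- \<eta> * ?best - ln (real K) \<le> ln (?W (Suc T)) - ln (?W 1)"
    using ln_hedge_potential_ge[OF \<open>finite V\<close> \<open>istar \<in> V\<close>, of \<eta> l "Suc T"] by simp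
  also have "\<dots> = (\<Sum>t=1..T. ln (?W (Suc t)) - ln (?W t))"
    by (rule sum_Suc_diff[symmetric]) simp
  also have "\<dots> \<le> (\<Sum>t=1..T. - \<eta> * (\<Sum>i\<in>V. hedge_q V \<eta> l t i * l t i) + \<eta>\<^sup>2 * ?R t)"
    using assms \<open>V \<noteq> {}\<close> by (intro sum_mono ln_hedge_potential_Suc_le) auto
  also have "\<dots> = - \<eta> * ?loss + \<eta>\<^sup>2 * (\<Sum>t=1..T. ?R t)"
    by (simp add: sum.distrib sum_distrib_left distrib_left)
  finally have "\<eta> * (?loss - ?best) \<le> ln (real K) + \<eta>\<^sup>2 * (\<Sum>t=1..T. ?R t)"
    by (simp add: algebra_simps)
  then show ?thesis
    using \<open>\<eta> > 0\<close> by (simp add: field_simps power2_eq_square)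
qed

end
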